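(* Let $N_0\in L^\infty(\Omega)$ with $N_0\ge 0$ a.e. For $\phi,\varphi\in L^\infty(Q)$ define \[ \Theta(\phi,\varphi)(x,t)=\frac{N_0(x)+r_N\int_0^t e^{\mu_N s}e^{\alpha_H\gamma_H\int_0^s|\phi(x,\xi)|d\xi}e^{\beta_1\int_0^s|\varphi(x,\xi)|d\xi}\,ds}{e^{\mu_N t}e^{\alpha_H\gamma_H\int_0^t|\phi(x,\xi)|d\xi}e^{\beta_1\int_0^t|\varphi(x,\xi)|d\xi}},\qquad (x,t)\in Q. \] Then for any $\phi,\phi_1,\phi_2,\varphi,\varphi_1,\varphi_2\in L^\infty(Q)$: (i) $0\le\Theta(\phi,\varphi)(x,t)\le\|N_0\|_{L^\infty(\Omega)}+r_N T$ for a.e. $(x,t)\in Q$; (ii) $\|\Theta(\phi_1,\varphi_1)-\Theta(\phi_2,\varphi_2)\|_{L^\infty(Q)}\le C_1\big(\|\phi_1-\phi_2\|_{L^\infty(Q)}+\|\varphi_1-\varphi_2\|_{L^\infty(Q)}\big)$, where $C_1$ is a constant depending on $r_N,\mu_N,\beta_1,\alpha_H,\gamma_H,T$, $\|\phi_1\|_{L^\infty(Q)}$, $\|\phi_2\|_{L^\infty(Q)}$, $\|\varphi_1\|_{L^\infty(Q)}$, $\|\varphi_2\|_{L^\infty(Q)}$ and $\|N_0\|_{L^\infty(\Omega)}$.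
   Context: $\Omega\subset\mathbb{R}^2$ is a bounded domain, $0<T<\infty$, $Q=\Omega\times(0,T)$. The parameters $r_N,\mu_N,\beta_1,\alpha_H,\gamma_H$ are positive constants. *)

theory Defs
  imports "HOL-Analysis.Analysis" "HOL-Probability.Essential_Supremum"
begin

definition bounded_domain :: "(real^2) set \<Rightarrow> bool" where
  "bounded_domain \<Omega> \<longleftrightarrow> \<Omega> \<noteq> {} \<and> open \<Omega> \<and> connected \<Omega> \<and> bounded \<Omega>"

definition Linf_norm :: "'a measure \<Rightarrow> ('a \<Rightarrow> real) \<Rightarrow> real" where
  "Linf_norm M f = real_of_ereal (esssup M (\<lambda>x. ereal \<bar>f x\<bar>))"

definition in_Linf :: "('a::euclidean_space) set \<Rightarrow> ('a \<Rightarrow> real) \<Rightarrow> bool" where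
  "in_Linf S f \<longleftrightarrow> f \<in> borel_measurable borel \<and> (\<exists>C. AE x in lebesgue_on S. \<bar>f x\<bar> \<le> C)"

definition Theta ::
  "real \<Rightarrow> real \<Rightarrow> real \<Rightarrow> real \<Rightarrow> real \<Rightarrow> ((real^2) \<Rightarrow> real)
   \<Rightarrow> ((real^2) \<times> real \<Rightarrow> real) \<Rightarrow> ((real^2) \<times> real \<Rightarrow> real) \<Rightarrow> (real^2) \<times> real \<Rightarrow> real" where
  "Theta rN muN beta1 alphaH gammaH N0 phi vphi = (\<lambda>(x, t).
     (N0 x + rN * (LINT s:{0..t}|lborel.
          exp (muN * s) * exp (alphaH * gammaH * (LINT \<xi>:{0..s}|lborel. \<bar>phi (x, \<xi>)\<bar>))
                        * exp (beta1 * (LINT \<xi>:{0..s}|lborel. \<bar>vphi (x, \<xi>)\<bar>))))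
     / (exp (muN * t) * exp (alphaH * gammaH * (LINT \<xi>:{0..t}|lborel. \<bar>phi (x, \<xi>)\<bar>))
                      * exp (beta1 * (LINT \<xi>:{0..t}|lborel. \<bar>vphi (x, \<xi>)\<bar>))))"

end

theory Submission
  imports Defs
begin

text \<open>
  For fixed \<open>x\<close> let \<open>A(s) = mu_N s + alpha_H gamma_H int_0^s |phi(x,.)| + beta_1 int_0^s |varphi(x,.)|\<close>,
  a nondecreasing function with \<open>A(0) = 0\<close>. Then
  \<open>Theta(x,t) = N_0(x) exp(-A(t)) + r_N int_0^t exp(-(A(t) - A(s))) ds\<close>, and both exponentials lie
  in \<open>(0,1]\<close>, so \<open>0 <= Theta(x,t) <= N_0(x) + r_N t\<close>. Since \<open>u \<mapsto> exp(-u)\<close> is 1-Lipschitz on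
  \<open>[0,oo)\<close> and the increments \<open>A(t) - A(s)\<close> of two sets of data differ by at most
  \<open>T (alpha_H gamma_H ||phi_1 - phi_2|| + beta_1 ||varphi_1 - varphi_2||)\<close>, one may take
  \<open>C_1 = (||N_0|| + r_N T) T (alpha_H gamma_H + beta_1)\<close>. The almost-everywhere statements on \<open>Q\<close>
  are assembled fibrewise in \<open>x\<close> with Fubini's theorem for null sets.
\<close>

lemma set_integrable_abs_Icc:
  fixes g :: "real \<Rightarrow> real"
  assumes g: "g \<in> borel_measurable borel"
    and bound: "AE y in lborel. y \<in> {0<..<T} \<longrightarrow> \<bar>g y\<bar> \<le> C"
    and s: "0 \<le> s" "s < T"
  shows "set_integrable lborel {0..s} (\<lambda>y. \<bar>g y\<bar>)"
  unfolding set_integrable_def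
proof (rule integrableI_bounded_set_indicator[where B=C])
  show "AE y in lborel. y \<in> {0..s} \<longrightarrow> norm \<bar>g y\<bar> \<le> C"
    using bound AE_lborel_singleton[of 0] by eventually_elim (use s in auto)
qed (use g s in \<open>auto simp: ennreal_less_top\<close>)

lemma set_integral_abs_Icc_split:
  fixes g :: "real \<Rightarrow> real"
  assumes g: "g \<in> borel_measurable borel"
    and bound: "AE y in lborel. y \<in> {0<..<T} \<longrightarrow> \<bar>g y\<bar> \<le> C"
    and s: "0 \<le> s" "s \<le> s'" "s' < T"
  shows "(LINT y:{0..s'}|lborel. \<bar>g y\<bar>)
           = (LINT y:{0..s}|lborel. \<bar>g y\<bar>) + (LINT y:{s<..s'}|lborel. \<bar>g y\<bar>)"
proof -
  have int: "set_integrable lborel {0..s'} (\<lambda>y. \<bar>g y\<bar>)"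
    using set_integrable_abs_Icc[OF g bound] s by auto
  have "{0..s'} = {0..s} \<union> {s<..s'}" using s by auto
  then show ?thesis
    by (metis int set_integral_Un set_integrable_subset ivl_disj_int_two(8) sets_lborel
        atLeastAtMost_borel greaterThanAtMost_borel Un_upper1 Un_upper2)
qed

lemma set_integral_abs_nonneg:
  fixes g :: "real \<Rightarrow> real"
  shows "0 \<le> (LINT y:S|lborel. \<bar>g y\<bar>)"
  unfolding set_lebesgue_integral_def by (intro integral_nonneg_AE) (auto simp: indicator_def)

lemma set_integral_abs_Icc_mono:
  fixes g :: "real \<Rightarrow> real"
  assumes "g \<in> borel_measurable borel"
    and "AE y in lborel. y \<in> {0<..<T} \<longrightarrow> \<bar>g y\<bar> \<le> C"
    and "0 \<le> s" "s \<le> s'" "s' < T"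
  shows "(LINT y:{0..s}|lborel. \<bar>g y\<bar>) \<le> (LINT y:{0..s'}|lborel. \<bar>g y\<bar>)"
  using set_integral_abs_Icc_split[OF assms] set_integral_abs_nonneg[of "{s<..s'}" g] by linarith

lemma set_integral_singleton_lborel:
  fixes f :: "real \<Rightarrow> real"
  shows "(LINT y:{a}|lborel. f y) = 0"
  unfolding set_lebesgue_integral_def
  by (rule integral_eq_zero_AE) (use AE_lborel_singleton[of a] in \<open>auto elim!: AE_mp\<close>)

lemma set_integral_abs_Icc_increment_diff:
  fixes g1 g2 :: "real \<Rightarrow> real"
  assumes g1: "g1 \<in> borel_measurable borel"
    and bound1: "AE y in lborel. y \<in> {0<..<T} \<longrightarrow> \<bar>g1 y\<bar> \<le> C1"
    and g2: "g2 \<in> borel_measurable borel"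
    and bound2: "AE y in lborel. y \<in> {0<..<T} \<longrightarrow> \<bar>g2 y\<bar> \<le> C2"
    and diff: "AE y in lborel. y \<in> {0<..<T} \<longrightarrow> \<bar>g1 y - g2 y\<bar> \<le> d"
    and s: "0 \<le> s" "s \<le> s'" "s' < T"
  shows "\<bar>((LINT y:{0..s'}|lborel. \<bar>g1 y\<bar>) - (LINT y:{0..s}|lborel. \<bar>g1 y\<bar>))
          - ((LINT y:{0..s'}|lborel. \<bar>g2 y\<bar>) - (LINT y:{0..s}|lborel. \<bar>g2 y\<bar>))\<bar> \<le> (s' - s) * d"
proof -
  have sub: "{s<..s'} \<subseteq> {0..s'}" using s by auto
  have int1: "set_integrable lborel {s<..s'} (\<lambda>y. \<bar>g1 y\<bar>)"
    using set_integrable_subset[OF set_integrable_abs_Icc[OF g1 bound1] _ sub] s by auto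
  have int2: "set_integrable lborel {s<..s'} (\<lambda>y. \<bar>g2 y\<bar>)"
    using set_integrable_subset[OF set_integrable_abs_Icc[OF g2 bound2] _ sub] s by auto
  have int_d: "set_integrable lborel {s<..s'} (\<lambda>y. d)"
    unfolding set_integrable_def
    by (rule integrableI_bounded_set_indicator[where B="\<bar>d\<bar>"]) (use s in \<open>auto simp: ennreal_less_top\<close>)
  have ae: "AE y \<in> {s<..s'} in lborel. \<bar>\<bar>g1 y\<bar> - \<bar>g2 y\<bar>\<bar> \<le> d"
    using diff by eventually_elim (use s in auto)
  have "(LINT y:{s<..s'}|lborel. \<bar>g1 y\<bar>) \<le> (LINT y:{s<..s'}|lborel. \<bar>g2 y\<bar> + d)"
    by (rule set_integral_mono_AE[OF int1 set_integral_add(1)[OF int2 int_d]])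
       (use ae in \<open>eventually_elim, auto\<close>)
  moreover have "(LINT y:{s<..s'}|lborel. \<bar>g2 y\<bar>) \<le> (LINT y:{s<..s'}|lborel. \<bar>g1 y\<bar> + d)"
    by (rule set_integral_mono_AE[OF int2 set_integral_add(1)[OF int1 int_d]])
       (use ae in \<open>eventually_elim, auto\<close>)
  moreover have "(LINT y:{s<..s'}|lborel. d) = (s' - s) * d"
    using s by (simp add: set_integral_const)
  ultimately show ?thesis
    using set_integral_abs_Icc_split[OF g1 bound1 s] set_integral_abs_Icc_split[OF g2 bound2 s]
      set_integral_add(2)[OF int2 int_d] set_integral_add(2)[OF int1 int_d]
    by (simp add: abs_le_iff)
qed

section \<open>The Duhamel quotient of a nondecreasing exponent\<close>

text \<open>The value at \<open>t\<close> of the solution of \<open>n' = r - A' n\<close>, \<open>n(0) = N\<close>.\<close>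

definition duhamel_quotient :: "real \<Rightarrow> real \<Rightarrow> (real \<Rightarrow> real) \<Rightarrow> real \<Rightarrow> real" where
  "duhamel_quotient N r A t = (N + r * (LINT s:{0..t}|lborel. exp (A s))) / exp (A t)"

lemma set_integrable_exp_mono_on:
  fixes A :: "real \<Rightarrow> real"
  assumes mono: "mono_on {0..t} A" and t: "0 \<le> t"
  shows "set_integrable lborel {0..t} (\<lambda>s. exp (A s))"
proof -
  define B where "B s = exp (A (min t (max 0 s)))" for s
  have "mono B"
    unfolding B_def mono_def using t by (auto intro!: mono_onD[OF mono] simp: min_def max_def)
  then have meas: "B \<in> borel_measurable borel" by (rule borel_measurable_mono)
  have "set_integrable lborel {0..t} B"
    unfolding set_integrable_def
  proof (rule integrableI_bounded_set_indicator[where B="exp (A t)"])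
    show "AE s in lborel. s \<in> {0..t} \<longrightarrow> norm (B s) \<le> exp (A t)"
      by (intro AE_I2 impI) (use t in \<open>auto simp: B_def intro!: mono_onD[OF mono]\<close>)
  qed (use meas t in \<open>auto simp: ennreal_less_top\<close>)
  moreover have "set_integrable lborel {0..t} B = set_integrable lborel {0..t} (\<lambda>s. exp (A s))"
    by (rule set_integrable_cong) (auto simp: B_def)
  ultimately show ?thesis by simp
qed

lemma duhamel_quotient_eq:
  "duhamel_quotient N r A t = N * exp (- A t) + r * (LINT s:{0..t}|lborel. exp (- (A t - A s)))"
proof -
  have "(LINT s:{0..t}|lborel. exp (- (A t - A s))) = (LINT s:{0..t}|lborel. exp (A s) / exp (A t))"
    by (simp add: exp_diff)
  also have "\<dots> = (LINT s:{0..t}|lborel. exp (A s)) / exp (A t)" by simp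
  finally show ?thesis
    unfolding duhamel_quotient_def by (simp add: exp_minus divide_inverse distrib_right mult.assoc)
qed

lemma duhamel_quotient_bounds:
  fixes A :: "real \<Rightarrow> real"
  assumes mono: "mono_on {0..t} A" and A0: "A 0 = 0"
    and t: "0 \<le> t" and N: "0 \<le> N" and r: "0 \<le> r"
  shows "0 \<le> duhamel_quotient N r A t \<and> duhamel_quotient N r A t \<le> N + r * t"
proof -
  let ?I = "LINT s:{0..t}|lborel. exp (A s)"
  have I_nonneg: "0 \<le> ?I"
    unfolding set_lebesgue_integral_def by (intro integral_nonneg_AE) (auto simp: indicator_def)
  have int_const: "set_integrable lborel {0..t} (\<lambda>s. exp (A t))"
    unfolding set_integrable_def
    by (rule integrableI_bounded_set_indicator[where B="exp (A t)"]) (use t in \<open>auto simp: ennreal_less_top\<close>)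
  have "?I \<le> (LINT s:{0..t}|lborel. exp (A t))"
    by (rule set_integral_mono_AE[OF set_integrable_exp_mono_on[OF mono t] int_const])
       (auto intro!: AE_I2 mono_onD[OF mono])
  also have "\<dots> = t * exp (A t)" using t by (simp add: set_integral_const)
  finally have I_le: "?I \<le> t * exp (A t)" .
  have "1 \<le> exp (A t)" using mono_onD[OF mono, of 0 t] t A0 by simp
  then have "N + r * ?I \<le> N * exp (A t) + r * (t * exp (A t))"
    using N r I_le by (intro add_mono mult_left_mono) (auto simp: mult_le_cancel_left1)
  then have "N + r * ?I \<le> (N + r * t) * exp (A t)" by (simp add: algebra_simps)
  then show ?thesis
    using I_nonneg N r unfolding duhamel_quotient_def by (simp add: divide_le_eq)
qed

lemma abs_exp_minus_diff_le:
  fixes u v :: real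
  assumes "0 \<le> u" "0 \<le> v"
  shows "\<bar>exp (- u) - exp (- v)\<bar> \<le> \<bar>u - v\<bar>"
proof -
  have one_sided: "exp (- u) - exp (- v) \<le> v - u" if "0 \<le> u" "u \<le> v" for u v :: real
  proof -
    have "exp (- u) - exp (- v) = exp (- u) * (1 - exp (- (v - u)))"
      by (simp add: algebra_simps exp_diff[symmetric] exp_minus_inverse) (simp add: exp_add[symmetric])
    also have "\<dots> \<le> 1 * (v - u)"
    proof (rule mult_mono)
      show "1 - exp (- (v - u)) \<le> v - u"
        using exp_ge_add_one_self[of "u - v"] by (simp add: algebra_simps)
    qed (use that in auto)
    finally show ?thesis by simp
  qed
  show ?thesis
    using assms one_sided[of u v] one_sided[of v u] by (cases "u \<le> v") (auto simp: abs_if)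
qed

lemma weighted_sum_le_sum_mult:
  fixes a b x y :: real
  assumes "0 \<le> a" "0 \<le> b" "0 \<le> x" "0 \<le> y"
  shows "a * x + b * y \<le> (a + b) * (x + y)"
  using assms by (simp add: distrib_left distrib_right)

lemma duhamel_quotient_lipschitz:
  fixes A1 A2 :: "real \<Rightarrow> real"
  assumes mono1: "mono_on {0..t} A1" and mono2: "mono_on {0..t} A2"
    and A0: "A1 0 = 0" "A2 0 = 0"
    and t: "0 \<le> t" and N: "0 \<le> N" and r: "0 \<le> r"
    and increments: "\<And>s. s \<in> {0..t} \<Longrightarrow> \<bar>(A1 t - A1 s) - (A2 t - A2 s)\<bar> \<le> L"
  shows "\<bar>duhamel_quotient N r A1 t - duhamel_quotient N r A2 t\<bar> \<le> (N + r * t) * L"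
proof -
  let ?E1 = "\<lambda>s. exp (- (A1 t - A1 s))" and ?E2 = "\<lambda>s. exp (- (A2 t - A2 s))"
  let ?J1 = "LINT s:{0..t}|lborel. ?E1 s" and ?J2 = "LINT s:{0..t}|lborel. ?E2 s"
  have L: "0 \<le> L" using increments[of t] t by auto
  have int1: "set_integrable lborel {0..t} ?E1"
    using set_integrable_exp_mono_on[OF mono1 t] by (simp add: exp_diff)
  have int2: "set_integrable lborel {0..t} ?E2"
    using set_integrable_exp_mono_on[OF mono2 t] by (simp add: exp_diff)
  have int_L: "set_integrable lborel {0..t} (\<lambda>s. L)"
    unfolding set_integrable_def
    by (rule integrableI_bounded_set_indicator[where B=L]) (use t L in \<open>auto simp: ennreal_less_top\<close>)
  have pointwise: "\<bar>?E1 s - ?E2 s\<bar> \<le> L" if "s \<in> {0..t}" for s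
    using abs_exp_minus_diff_le[of "A1 t - A1 s" "A2 t - A2 s"] increments[OF that]
      mono_onD[OF mono1, of s t] mono_onD[OF mono2, of s t] that by auto
  have "?J1 \<le> (LINT s:{0..t}|lborel. ?E2 s + L)"
    by (rule set_integral_mono_AE[OF int1 set_integral_add(1)[OF int2 int_L]])
       (intro AE_I2 impI, use pointwise in \<open>force simp: abs_le_iff\<close>)
  moreover have "?J2 \<le> (LINT s:{0..t}|lborel. ?E1 s + L)"
    by (rule set_integral_mono_AE[OF int2 set_integral_add(1)[OF int1 int_L]])
       (intro AE_I2 impI, use pointwise in \<open>force simp: abs_le_iff\<close>)
  moreover have "(LINT s:{0..t}|lborel. L) = t * L" using t by (simp add: set_integral_const)
  ultimately have J: "\<bar>?J1 - ?J2\<bar> \<le> t * L"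
    unfolding abs_le_iff using set_integral_add(2)[OF int2 int_L] set_integral_add(2)[OF int1 int_L]
    by linarith
  have E: "\<bar>exp (- A1 t) - exp (- A2 t)\<bar> \<le> L"
    using pointwise[of 0] t A0 by simp
  have "\<bar>duhamel_quotient N r A1 t - duhamel_quotient N r A2 t\<bar>
        = \<bar>N * (exp (- A1 t) - exp (- A2 t)) + r * (?J1 - ?J2)\<bar>"
    unfolding duhamel_quotient_eq by (simp add: algebra_simps)
  also have "\<dots> \<le> N * \<bar>exp (- A1 t) - exp (- A2 t)\<bar> + r * \<bar>?J1 - ?J2\<bar>"
    by (rule order_trans[OF abs_triangle_ineq]) (use N r in \<open>simp add: abs_mult\<close>)
  also have "\<dots> \<le> N * L + r * (t * L)"
    using N r E J by (intro add_mono mult_left_mono) auto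
  finally show ?thesis by (simp add: algebra_simps)
qed

definition theta_exponent ::
  "real \<Rightarrow> real \<Rightarrow> real \<Rightarrow> (real \<Rightarrow> real) \<Rightarrow> (real \<Rightarrow> real) \<Rightarrow> real \<Rightarrow> real" where
  "theta_exponent mu a b g h s =
     mu * s + a * (LINT y:{0..s}|lborel. \<bar>g y\<bar>) + b * (LINT y:{0..s}|lborel. \<bar>h y\<bar>)"

lemma Theta_eq_duhamel_quotient:
  "Theta rN muN beta1 alphaH gammaH N0 phi vphi (x, t) =
     duhamel_quotient (N0 x) rN
       (theta_exponent muN (alphaH * gammaH) beta1 (\<lambda>y. phi (x, y)) (\<lambda>y. vphi (x, y))) t"
  by (simp add: Theta_def duhamel_quotient_def theta_exponent_def exp_add)

lemma theta_exponent_0: "theta_exponent mu a b g h 0 = 0"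
  by (simp add: theta_exponent_def set_integral_singleton_lborel)

lemma mono_on_theta_exponent:
  fixes g h :: "real \<Rightarrow> real"
  assumes g: "g \<in> borel_measurable borel" and bound_g: "AE y in lborel. y \<in> {0<..<T} \<longrightarrow> \<bar>g y\<bar> \<le> Cg"
    and h: "h \<in> borel_measurable borel" and bound_h: "AE y in lborel. y \<in> {0<..<T} \<longrightarrow> \<bar>h y\<bar> \<le> Ch"
    and coeffs: "0 \<le> mu" "0 \<le> a" "0 \<le> b" and t: "t < T"
  shows "mono_on {0..t} (theta_exponent mu a b g h)"
proof (rule mono_onI)
  fix s s' assume "s \<in> {0..t}" "s' \<in> {0..t}" "s \<le> s'"
  then have s: "0 \<le> s" "s \<le> s'" "s' < T" using t by auto
  show "theta_exponent mu a b g h s \<le> theta_exponent mu a b g h s'"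
    unfolding theta_exponent_def
    using set_integral_abs_Icc_mono[OF g bound_g s] set_integral_abs_Icc_mono[OF h bound_h s] s coeffs
    by (intro add_mono mult_left_mono) auto
qed

lemma theta_exponent_increment_diff:
  fixes g1 g2 h1 h2 :: "real \<Rightarrow> real"
  assumes g1: "g1 \<in> borel_measurable borel" and bound_g1: "AE y in lborel. y \<in> {0<..<T} \<longrightarrow> \<bar>g1 y\<bar> \<le> Cg1"
    and g2: "g2 \<in> borel_measurable borel" and bound_g2: "AE y in lborel. y \<in> {0<..<T} \<longrightarrow> \<bar>g2 y\<bar> \<le> Cg2"
    and h1: "h1 \<in> borel_measurable borel" and bound_h1: "AE y in lborel. y \<in> {0<..<T} \<longrightarrow> \<bar>h1 y\<bar> \<le> Ch1"
    and h2: "h2 \<in> borel_measurable borel" and bound_h2: "AE y in lborel. y \<in> {0<..<T} \<longrightarrow> \<bar>h2 y\<bar> \<le> Ch2"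
    and diff_g: "AE y in lborel. y \<in> {0<..<T} \<longrightarrow> \<bar>g1 y - g2 y\<bar> \<le> dg"
    and diff_h: "AE y in lborel. y \<in> {0<..<T} \<longrightarrow> \<bar>h1 y - h2 y\<bar> \<le> dh"
    and coeffs: "0 \<le> a" "0 \<le> b" and s: "0 \<le> s" "s \<le> t" "t < T"
  shows "\<bar>(theta_exponent mu a b g1 h1 t - theta_exponent mu a b g1 h1 s)
          - (theta_exponent mu a b g2 h2 t - theta_exponent mu a b g2 h2 s)\<bar>
         \<le> (t - s) * (a * dg + b * dh)"
proof -
  let ?G = "\<lambda>g. (LINT y:{0..t}|lborel. \<bar>g y\<bar>) - (LINT y:{0..s}|lborel. \<bar>g y\<bar>)"
  have G: "\<bar>?G g1 - ?G g2\<bar> \<le> (t - s) * dg"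
    by (rule set_integral_abs_Icc_increment_diff[OF g1 bound_g1 g2 bound_g2 diff_g s])
  have H: "\<bar>?G h1 - ?G h2\<bar> \<le> (t - s) * dh"
    by (rule set_integral_abs_Icc_increment_diff[OF h1 bound_h1 h2 bound_h2 diff_h s])
  have "\<bar>(theta_exponent mu a b g1 h1 t - theta_exponent mu a b g1 h1 s)
          - (theta_exponent mu a b g2 h2 t - theta_exponent mu a b g2 h2 s)\<bar>
        = \<bar>a * (?G g1 - ?G g2) + b * (?G h1 - ?G h2)\<bar>"
    by (simp add: theta_exponent_def algebra_simps)
  also have "\<dots> \<le> a * \<bar>?G g1 - ?G g2\<bar> + b * \<bar>?G h1 - ?G h2\<bar>"
    by (rule order_trans[OF abs_triangle_ineq]) (use coeffs in \<open>simp add: abs_mult\<close>)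
  also have "\<dots> \<le> a * ((t - s) * dg) + b * ((t - s) * dh)"
    using G H coeffs by (intro add_mono mult_left_mono) auto
  finally show ?thesis by (simp add: algebra_simps)
qed

section \<open>Essential suprema and fibres of product sets\<close>

lemma Linf_norm_nonneg: "0 \<le> Linf_norm M f"
proof (cases "(\<lambda>x. ereal \<bar>f x\<bar>) \<in> borel_measurable M")
  case False
  then show ?thesis by (simp add: Linf_norm_def esssup_non_measurable top_ereal_def)
next
  case meas: True
  show ?thesis
  proof (cases "emeasure M (space M) = 0")
    case True
    then show ?thesis using meas by (simp add: Linf_norm_def esssup_zero_space)
  next
    case False
    have "esssup M (\<lambda>x. ereal 0) \<le> esssup M (\<lambda>x. ereal \<bar>f x\<bar>)"
      by (rule esssup_mono) auto
    then have "0 \<le> esssup M (\<lambda>x. ereal \<bar>f x\<bar>)"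
      using esssup_const[OF False, of "ereal 0"] by (simp add: zero_ereal_def)
    then show ?thesis unfolding Linf_norm_def by (simp add: real_of_ereal_pos)
  qed
qed

lemma Linf_norm_le:
  assumes "AE x in M. \<bar>f x\<bar> \<le> B" "0 \<le> B"
  shows "Linf_norm M f \<le> B"
proof (cases "(\<lambda>x. ereal \<bar>f x\<bar>) \<in> borel_measurable M")
  case False
  then show ?thesis using assms by (simp add: Linf_norm_def esssup_non_measurable top_ereal_def)
next
  case True
  have "esssup M (\<lambda>x. ereal \<bar>f x\<bar>) \<le> ereal B"
    using assms True by (intro esssup_I) auto
  then show ?thesis unfolding Linf_norm_def using assms(2)
    by (cases "esssup M (\<lambda>x. ereal \<bar>f x\<bar>)") auto
qed

lemma AE_abs_le_Linf_norm:
  assumes "in_Linf S f"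
  shows "AE x in lebesgue_on S. \<bar>f x\<bar> \<le> Linf_norm (lebesgue_on S) f"
proof -
  obtain C where f: "f \<in> borel_measurable borel" and C: "AE x in lebesgue_on S. \<bar>f x\<bar> \<le> C"
    using assms unfolding in_Linf_def by auto
  have "f \<in> borel_measurable (lebesgue_on S)"
    using f by (intro measurable_restrict_space1 measurable_completion) simp
  then have meas: "(\<lambda>x. ereal \<bar>f x\<bar>) \<in> borel_measurable (lebesgue_on S)" by measurable
  have le: "esssup (lebesgue_on S) (\<lambda>x. ereal \<bar>f x\<bar>) \<le> ereal C"
    using meas C by (intro esssup_I) auto
  show ?thesis using esssup_AE[of "\<lambda>x. ereal \<bar>f x\<bar>" "lebesgue_on S"]
  proof eventually_elim
    case (elim x)
    then show ?case using le unfolding Linf_norm_def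
      by (cases "esssup (lebesgue_on S) (\<lambda>x. ereal \<bar>f x\<bar>)") auto
  qed
qed

lemma in_Linf_diff:
  assumes "in_Linf S f" "in_Linf S g"
  shows "in_Linf S (\<lambda>x. f x - g x)"
proof -
  obtain Cf Cg where "f \<in> borel_measurable borel" "g \<in> borel_measurable borel"
    and "AE x in lebesgue_on S. \<bar>f x\<bar> \<le> Cf" "AE x in lebesgue_on S. \<bar>g x\<bar> \<le> Cg"
    using assms unfolding in_Linf_def by auto
  then show ?thesis
    unfolding in_Linf_def by (auto intro!: exI[of _ "Cf + Cg"] elim!: AE_mp)
qed

lemma measurable_section:
  fixes f :: "'a::euclidean_space \<times> 'b::euclidean_space \<Rightarrow> real"
  assumes "f \<in> borel_measurable borel"
  shows "(\<lambda>y. f (x, y)) \<in> borel_measurable borel"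
  using measurable_compose[OF _ assms, of "\<lambda>y. (x, y)"]
  by (auto intro: borel_measurable_continuous_onI continuous_intros)

lemma AE_lborel_of_lebesgue_on:
  assumes "AE x in lebesgue_on S. P x" "S \<in> sets lebesgue"
  shows "AE x in lborel. x \<in> S \<longrightarrow> P x"
proof -
  have "AE x in lebesgue. x \<in> S \<longrightarrow> P x"
    using assms AE_restrict_space_iff by (metis sets.Int_space_eq2)
  then show ?thesis by (simp add: AE_completion_iff)
qed

lemma pair_sigma_finite_lborel:
  "pair_sigma_finite (lborel::'a::euclidean_space measure) (lborel::'b::euclidean_space measure)"
  by (simp add: pair_sigma_finite.intro lborel.sigma_finite_measure_axioms)

lemma AE_fibres_of_lebesgue_on_Times:
  fixes A :: "'a::euclidean_space set" and B :: "'b::euclidean_space set"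
  assumes "AE p in lebesgue_on (A \<times> B). P p" "A \<times> B \<in> sets lebesgue"
  shows "AE x in lborel. x \<in> A \<longrightarrow> (AE y in lborel. y \<in> B \<longrightarrow> P (x, y))"
proof -
  have "AE p in lborel. p \<in> A \<times> B \<longrightarrow> P p"
    by (rule AE_lborel_of_lebesgue_on[OF assms])
  then have "AE p in lborel \<Otimes>\<^sub>M lborel. p \<in> A \<times> B \<longrightarrow> P p" by (metis lborel_prod)
  then have "AE x in lborel. AE y in lborel. (x, y) \<in> A \<times> B \<longrightarrow> P (x, y)"
    using pair_sigma_finite.AE_pair[OF pair_sigma_finite_lborel] by fastforce
  then show ?thesis by eventually_elim auto
qed

lemma AE_lebesgue_on_Times_of_fibres:
  fixes A :: "'a::euclidean_space set" and B :: "'b::euclidean_space set"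
  assumes fibres: "AE x in lborel. x \<in> A \<longrightarrow> (\<forall>y\<in>B. P (x, y))" and AB: "A \<times> B \<in> sets lebesgue"
  shows "AE p in lebesgue_on (A \<times> B). P p"
proof -
  obtain N where N: "N \<in> sets lborel" "emeasure lborel N = 0"
    and bad: "{x\<in>space lborel. \<not> (x \<in> A \<longrightarrow> (\<forall>y\<in>B. P (x, y)))} \<subseteq> N"
    using fibres unfolding eventually_ae_filter null_sets_def by auto
  have [measurable]: "N \<in> sets borel" using N(1) by simp
  have "AE p in lborel \<Otimes>\<^sub>M lborel. fst p \<notin> N"
    by (rule pair_sigma_finite.AE_pair_measure[OF pair_sigma_finite_lborel])
       (measurable, use AE_not_in[of N lborel] N in \<open>auto simp: null_sets_def\<close>)
  then have "AE p in lborel. fst p \<notin> N" by (metis lborel_prod)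
  then have "AE p in lebesgue. fst p \<notin> N" by (simp add: AE_completion_iff)
  then have "AE p in lebesgue_on (A \<times> B). fst p \<notin> N"
    using AB by (simp add: AE_restrict_space_iff) (auto elim: eventually_mono)
  moreover have "AE p in lebesgue_on (A \<times> B). p \<in> A \<times> B"
    by (rule AE_I2) (simp add: space_restrict_space)
  ultimately show ?thesis
    by eventually_elim (use bad in auto)
qed

lemma AE_fibres_abs_le_Linf_norm:
  fixes A :: "'a::euclidean_space set" and B :: "'b::euclidean_space set"
  assumes "in_Linf (A \<times> B) f" "A \<times> B \<in> sets lebesgue"
  shows "AE x in lborel. x \<in> A \<longrightarrow>
           (AE y in lborel. y \<in> B \<longrightarrow> \<bar>f (x, y)\<bar> \<le> Linf_norm (lebesgue_on (A \<times> B)) f)"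
  by (rule AE_fibres_of_lebesgue_on_Times[OF AE_abs_le_Linf_norm[OF assms(1)] assms(2)])

lemma AE_lborel_nonneg_le_Linf_norm:
  assumes "S \<in> sets lebesgue" "in_Linf S f" "AE x in lebesgue_on S. f x \<ge> 0"
  shows "AE x in lborel. x \<in> S \<longrightarrow> 0 \<le> f x \<and> f x \<le> Linf_norm (lebesgue_on S) f"
  by (rule AE_lborel_of_lebesgue_on[OF _ assms(1)])
     (use assms(3) AE_abs_le_Linf_norm[OF assms(2)] in \<open>eventually_elim, auto\<close>)

lemma sets_lebesgue_open: "open S \<Longrightarrow> S \<in> sets lebesgue"
  by (simp add: borel_open sets_completionI_sets)

section \<open>Estimates for \<open>\<Theta>\<close>\<close>

lemma Theta_bounds_at:
  fixes phi vphi :: "(real^2) \<times> real \<Rightarrow> real"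
  assumes coeffs: "0 \<le> rN" "0 \<le> muN" "0 \<le> beta1" "0 \<le> alphaH * gammaH"
    and phi: "phi \<in> borel_measurable borel"
    and bound_phi: "AE y in lborel. y \<in> {0<..<T} \<longrightarrow> \<bar>phi (x, y)\<bar> \<le> Cphi"
    and vphi: "vphi \<in> borel_measurable borel"
    and bound_vphi: "AE y in lborel. y \<in> {0<..<T} \<longrightarrow> \<bar>vphi (x, y)\<bar> \<le> Cvphi"
    and t: "0 \<le> t" "t < T" and N0: "0 \<le> N0 x"
  shows "0 \<le> Theta rN muN beta1 alphaH gammaH N0 phi vphi (x, t)
         \<and> Theta rN muN beta1 alphaH gammaH N0 phi vphi (x, t) \<le> N0 x + rN * t"
  unfolding Theta_eq_duhamel_quotient
  by (rule duhamel_quotient_bounds[OF mono_on_theta_exponent[OF measurable_section[OF phi] bound_phi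
        measurable_section[OF vphi] bound_vphi coeffs(2,4,3) t(2)] theta_exponent_0 t(1) N0 coeffs(1)])

lemma Theta_diff_at:
  fixes phi1 phi2 vphi1 vphi2 :: "(real^2) \<times> real \<Rightarrow> real"
  assumes coeffs: "0 \<le> rN" "0 \<le> muN" "0 \<le> beta1" "0 \<le> alphaH * gammaH"
    and phi1: "phi1 \<in> borel_measurable borel"
    and bound_phi1: "AE y in lborel. y \<in> {0<..<T} \<longrightarrow> \<bar>phi1 (x, y)\<bar> \<le> Cphi1"
    and phi2: "phi2 \<in> borel_measurable borel"
    and bound_phi2: "AE y in lborel. y \<in> {0<..<T} \<longrightarrow> \<bar>phi2 (x, y)\<bar> \<le> Cphi2"
    and vphi1: "vphi1 \<in> borel_measurable borel"
    and bound_vphi1: "AE y in lborel. y \<in> {0<..<T} \<longrightarrow> \<bar>vphi1 (x, y)\<bar> \<le> Cvphi1"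
    and vphi2: "vphi2 \<in> borel_measurable borel"
    and bound_vphi2: "AE y in lborel. y \<in> {0<..<T} \<longrightarrow> \<bar>vphi2 (x, y)\<bar> \<le> Cvphi2"
    and diff_phi: "AE y in lborel. y \<in> {0<..<T} \<longrightarrow> \<bar>phi1 (x, y) - phi2 (x, y)\<bar> \<le> dphi"
    and diff_vphi: "AE y in lborel. y \<in> {0<..<T} \<longrightarrow> \<bar>vphi1 (x, y) - vphi2 (x, y)\<bar> \<le> dvphi"
    and d: "0 \<le> dphi" "0 \<le> dvphi" and t: "0 \<le> t" "t < T" and N0: "0 \<le> N0 x"
  shows "\<bar>Theta rN muN beta1 alphaH gammaH N0 phi1 vphi1 (x, t)
          - Theta rN muN beta1 alphaH gammaH N0 phi2 vphi2 (x, t)\<bar>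
         \<le> (N0 x + rN * t) * (t * (alphaH * gammaH * dphi + beta1 * dvphi))"
  unfolding Theta_eq_duhamel_quotient
proof (rule duhamel_quotient_lipschitz[OF
      mono_on_theta_exponent[OF measurable_section[OF phi1] bound_phi1
        measurable_section[OF vphi1] bound_vphi1 coeffs(2,4,3) t(2)]
      mono_on_theta_exponent[OF measurable_section[OF phi2] bound_phi2
        measurable_section[OF vphi2] bound_vphi2 coeffs(2,4,3) t(2)]
      theta_exponent_0 theta_exponent_0 t(1) N0 coeffs(1)])
  let ?A = "\<lambda>phi vphi. theta_exponent muN (alphaH * gammaH) beta1 (\<lambda>y. phi (x, y)) (\<lambda>y. vphi (x, y))"
  let ?D = "alphaH * gammaH * dphi + beta1 * dvphi"
  fix s assume s: "s \<in> {0..t}"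
  have "\<bar>(?A phi1 vphi1 t - ?A phi1 vphi1 s) - (?A phi2 vphi2 t - ?A phi2 vphi2 s)\<bar> \<le> (t - s) * ?D"
    by (rule theta_exponent_increment_diff[OF measurable_section[OF phi1] bound_phi1
        measurable_section[OF phi2] bound_phi2 measurable_section[OF vphi1] bound_vphi1
        measurable_section[OF vphi2] bound_vphi2 diff_phi diff_vphi coeffs(4,3)])
       (use s t in auto)
  also have "\<dots> \<le> t * ?D"
    using s coeffs d by (intro mult_right_mono) auto
  finally show "\<bar>(?A phi1 vphi1 t - ?A phi1 vphi1 s) - (?A phi2 vphi2 t - ?A phi2 vphi2 s)\<bar> \<le> t * ?D" .
qed

lemma AE_Theta_bounds:
  fixes rN muN beta1 alphaH gammaH T :: real
  assumes coeffs: "0 \<le> rN" "0 \<le> muN" "0 \<le> beta1" "0 \<le> alphaH * gammaH"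
    and \<Omega>: "open \<Omega>" and N0: "in_Linf \<Omega> N0" "AE x in lebesgue_on \<Omega>. N0 x \<ge> 0"
    and phi: "in_Linf (\<Omega> \<times> {0<..<T}) phi" and vphi: "in_Linf (\<Omega> \<times> {0<..<T}) vphi"
  shows "AE p in lebesgue_on (\<Omega> \<times> {0<..<T}).
           0 \<le> Theta rN muN beta1 alphaH gammaH N0 phi vphi p \<and>
           Theta rN muN beta1 alphaH gammaH N0 phi vphi p \<le> Linf_norm (lebesgue_on \<Omega>) N0 + rN * T"
proof -
  let ?n0 = "Linf_norm (lebesgue_on \<Omega>) N0"
  let ?\<Theta> = "Theta rN muN beta1 alphaH gammaH N0 phi vphi"
  have Q: "\<Omega> \<times> {0<..<T} \<in> sets lebesgue" using \<Omega> by (intro sets_lebesgue_open open_Times) auto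
  note N0_fibres = AE_lborel_nonneg_le_Linf_norm[OF sets_lebesgue_open[OF \<Omega>] N0]
  have "AE x in lborel. x \<in> \<Omega> \<longrightarrow> (\<forall>t\<in>{0<..<T}. 0 \<le> ?\<Theta> (x, t) \<and> ?\<Theta> (x, t) \<le> ?n0 + rN * T)"
    using N0_fibres AE_fibres_abs_le_Linf_norm[OF phi Q] AE_fibres_abs_le_Linf_norm[OF vphi Q]
  proof eventually_elim
    case (elim x)
    show ?case
    proof (intro impI ballI)
      fix t assume x: "x \<in> \<Omega>" and t: "t \<in> {0<..<T}"
      have "0 \<le> ?\<Theta> (x, t) \<and> ?\<Theta> (x, t) \<le> N0 x + rN * t"
        by (rule Theta_bounds_at[OF coeffs]) (use elim x t phi vphi in \<open>auto simp: in_Linf_def\<close>)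
      moreover have "N0 x + rN * t \<le> ?n0 + rN * T"
        using elim x t coeffs by (intro add_mono mult_left_mono) auto
      ultimately show "0 \<le> ?\<Theta> (x, t) \<and> ?\<Theta> (x, t) \<le> ?n0 + rN * T" by linarith
    qed
  qed
  then show ?thesis by (rule AE_lebesgue_on_Times_of_fibres[OF _ Q])
qed

lemma Linf_norm_Theta_diff_le:
  fixes rN muN beta1 alphaH gammaH T :: real
  assumes coeffs: "0 \<le> rN" "0 \<le> muN" "0 \<le> beta1" "0 \<le> alphaH * gammaH" and T: "0 \<le> T"
    and \<Omega>: "open \<Omega>" and N0: "in_Linf \<Omega> N0" "AE x in lebesgue_on \<Omega>. N0 x \<ge> 0"
    and phi1: "in_Linf (\<Omega> \<times> {0<..<T}) phi1" and phi2: "in_Linf (\<Omega> \<times> {0<..<T}) phi2"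
    and vphi1: "in_Linf (\<Omega> \<times> {0<..<T}) vphi1" and vphi2: "in_Linf (\<Omega> \<times> {0<..<T}) vphi2"
  defines "Q \<equiv> lebesgue_on (\<Omega> \<times> {0<..<T})"
  shows "Linf_norm Q (\<lambda>p. Theta rN muN beta1 alphaH gammaH N0 phi1 vphi1 p
                          - Theta rN muN beta1 alphaH gammaH N0 phi2 vphi2 p)
         \<le> (Linf_norm (lebesgue_on \<Omega>) N0 + rN * T) * T * (alphaH * gammaH + beta1)
           * (Linf_norm Q (\<lambda>p. phi1 p - phi2 p) + Linf_norm Q (\<lambda>p. vphi1 p - vphi2 p))"
proof -
  let ?n0 = "Linf_norm (lebesgue_on \<Omega>) N0"
  let ?d1 = "Linf_norm Q (\<lambda>p. phi1 p - phi2 p)" and ?d2 = "Linf_norm Q (\<lambda>p. vphi1 p - vphi2 p)"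
  let ?\<Theta>1 = "Theta rN muN beta1 alphaH gammaH N0 phi1 vphi1"
  let ?\<Theta>2 = "Theta rN muN beta1 alphaH gammaH N0 phi2 vphi2"
  define B where "B = (?n0 + rN * T) * (T * (alphaH * gammaH * ?d1 + beta1 * ?d2))"
  have d: "0 \<le> ?d1" "0 \<le> ?d2" "0 \<le> ?n0" by (simp_all add: Linf_norm_nonneg)
  have Qs: "\<Omega> \<times> {0<..<T} \<in> sets lebesgue" using \<Omega> by (intro sets_lebesgue_open open_Times) auto
  note N0_fibres = AE_lborel_nonneg_le_Linf_norm[OF sets_lebesgue_open[OF \<Omega>] N0]
  note fibres = AE_fibres_abs_le_Linf_norm[OF _ Qs, folded Q_def]
  have "AE x in lborel. x \<in> \<Omega> \<longrightarrow> (\<forall>t\<in>{0<..<T}. \<bar>?\<Theta>1 (x, t) - ?\<Theta>2 (x, t)\<bar> \<le> B)"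
    using N0_fibres fibres[OF phi1] fibres[OF phi2] fibres[OF vphi1] fibres[OF vphi2]
      fibres[OF in_Linf_diff[OF phi1 phi2]] fibres[OF in_Linf_diff[OF vphi1 vphi2]]
  proof eventually_elim
    case (elim x)
    show ?case
    proof (intro impI ballI)
      fix t assume x: "x \<in> \<Omega>" and t: "t \<in> {0<..<T}"
      have "\<bar>?\<Theta>1 (x, t) - ?\<Theta>2 (x, t)\<bar>
            \<le> (N0 x + rN * t) * (t * (alphaH * gammaH * ?d1 + beta1 * ?d2))"
        by (rule Theta_diff_at[OF coeffs]) (use elim x t d phi1 phi2 vphi1 vphi2 in \<open>auto simp: in_Linf_def\<close>)
      also have "\<dots> \<le> B"
        unfolding B_def using elim x t coeffs d
        by (intro mult_mono add_mono mult_left_mono mult_right_mono) auto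
      finally show "\<bar>?\<Theta>1 (x, t) - ?\<Theta>2 (x, t)\<bar> \<le> B" .
    qed
  qed
  then have "AE p in Q. \<bar>?\<Theta>1 p - ?\<Theta>2 p\<bar> \<le> B"
    unfolding Q_def by (rule AE_lebesgue_on_Times_of_fibres[OF _ Qs])
  then have "Linf_norm Q (\<lambda>p. ?\<Theta>1 p - ?\<Theta>2 p) \<le> B"
    by (rule Linf_norm_le) (use coeffs d T in \<open>simp add: B_def\<close>)
  also have "B \<le> (?n0 + rN * T) * (T * ((alphaH * gammaH + beta1) * (?d1 + ?d2)))"
    unfolding B_def using coeffs d T weighted_sum_le_sum_mult[of "alphaH * gammaH" beta1 ?d1 ?d2]
    by (intro mult_left_mono) auto
  also have "\<dots> = (?n0 + rN * T) * T * (alphaH * gammaH + beta1) * (?d1 + ?d2)"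
    by (simp add: mult.assoc)
  finally show ?thesis .
qed

theorem lemma4:
  fixes rN muN beta1 alphaH gammaH T :: real
  assumes "rN > 0" "muN > 0" "beta1 > 0" "alphaH > 0" "gammaH > 0" "T > 0"
  shows
   "(\<forall>(\<Omega>::(real^2) set) N0 phi vphi.
       bounded_domain \<Omega> \<and> in_Linf \<Omega> N0 \<and> (AE x in lebesgue_on \<Omega>. N0 x \<ge> 0)
       \<and> in_Linf (\<Omega> \<times> {0<..<T}) phi \<and> in_Linf (\<Omega> \<times> {0<..<T}) vphi \<longrightarrow>
       (AE p in lebesgue_on (\<Omega> \<times> {0<..<T}).
          0 \<le> Theta rN muN beta1 alphaH gammaH N0 phi vphi p \<and>
          Theta rN muN beta1 alphaH gammaH N0 phi vphi p \<le> Linf_norm (lebesgue_on \<Omega>) N0 + rN * T))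
    \<and>
    (\<exists>C1 :: real \<Rightarrow> real \<Rightarrow> real \<Rightarrow> real \<Rightarrow> real \<Rightarrow> real.
     \<forall>(\<Omega>::(real^2) set) N0 phi1 phi2 vphi1 vphi2.
       bounded_domain \<Omega> \<and> in_Linf \<Omega> N0 \<and> (AE x in lebesgue_on \<Omega>. N0 x \<ge> 0)
       \<and> in_Linf (\<Omega> \<times> {0<..<T}) phi1 \<and> in_Linf (\<Omega> \<times> {0<..<T}) phi2
       \<and> in_Linf (\<Omega> \<times> {0<..<T}) vphi1 \<and> in_Linf (\<Omega> \<times> {0<..<T}) vphi2 \<longrightarrow>
       (let Q = lebesgue_on (\<Omega> \<times> {0<..<T}) in
        Linf_norm Q (\<lambda>p. Theta rN muN beta1 alphaH gammaH N0 phi1 vphi1 p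
                         - Theta rN muN beta1 alphaH gammaH N0 phi2 vphi2 p)
        \<le> C1 (Linf_norm Q phi1) (Linf_norm Q phi2) (Linf_norm Q vphi1) (Linf_norm Q vphi2)
              (Linf_norm (lebesgue_on \<Omega>) N0)
          * (Linf_norm Q (\<lambda>p. phi1 p - phi2 p) + Linf_norm Q (\<lambda>p. vphi1 p - vphi2 p))))"
proof -
  have coeffs: "0 \<le> rN" "0 \<le> muN" "0 \<le> beta1" "0 \<le> alphaH * gammaH"
    using assms by simp_all
  show ?thesis
    by (intro conjI allI impI exI[of _ "\<lambda>_ _ _ _ n0. (n0 + rN * T) * T * (alphaH * gammaH + beta1)"])
       (use AE_Theta_bounds[OF coeffs] Linf_norm_Theta_diff_le[OF coeffs] assms(6)
         in \<open>auto simp: bounded_domain_def Let_def\<close>)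
qed

end
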